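(* Let $m,\varepsilon>0$ and write $\widetilde{A}_k(x,t)=\widetilde{A}_k(x,t,m,\varepsilon)$. For each $k\in\{1,2\}$ and each $(x,t)\in\varepsilon\mathbb{Z}^2$, where $(x,t)\ne(0,0)$ if $k=1$ and $(x,t)\notin\{(-\varepsilon,0),(0,-\varepsilon)\}$ if $k=2$, $$\sqrt{1+m^2\varepsilon^2}\,\widetilde{A}_k(x,t+\varepsilon)+\sqrt{1+m^2\varepsilon^2}\,\widetilde{A}_k(x,t-\varepsilon)-\widetilde{A}_k(x+\varepsilon,t)-\widetilde{A}_k(x-\varepsilon,t)=0.$$
   Context: $\delta_{xy}$ is the Kronecker delta. For $\delta\in(0,1)$ let $A_k(x,t)=A_k(x,t,m,\varepsilon,\delta)$, $k\in\{1,2\}$, be the unique pair of complex-valued functions on $\{(x,t)\in\mathbb{R}^2:2x/\varepsilon,2t/\varepsilon,(x+t)/\varepsilon\in\mathbb{Z}\}$ satisfying: (1) for $2x/\varepsilon,2t/\varepsilon$ even, $A_1(x,t)=\frac{1}{\sqrt{1+m^2\varepsilon^2}}(A_1(x+\frac{\varepsilon}{2},t-\frac{\varepsilon}{2})+m\varepsilon A_2(x+\frac{\varepsilon}{2},t-\frac{\varepsilon}{2}))$ and $A_2(x,t)=\frac{1}{\sqrt{1+m^2\varepsilon^2}}(A_2(x-\frac{\varepsilon}{2},t-\frac{\varepsilon}{2})-m\varepsilon A_1(x-\frac{\varepsilon}{2},t-\frac{\varepsilon}{2}))+2\delta_{x0}\delta_{t0}$; (2) for $2x/\varepsilon,2t/\varepsilon$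 odd, $A_1(x,t)=\frac{1}{\sqrt{1-\delta^2}}(A_1(x+\frac{\varepsilon}{2},t-\frac{\varepsilon}{2})-i\delta A_2(x+\frac{\varepsilon}{2},t-\frac{\varepsilon}{2}))$ and $A_2(x,t)=\frac{1}{\sqrt{1-\delta^2}}(A_2(x-\frac{\varepsilon}{2},t-\frac{\varepsilon}{2})+i\delta A_1(x-\frac{\varepsilon}{2},t-\frac{\varepsilon}{2}))$; (3) $\sum_{(x,t)\in\varepsilon\mathbb{Z}^2}(|A_1|^2+|A_2|^2)<\infty$ (existence and uniqueness are known). $\widetilde{A}_k(x,t,m,\varepsilon):=\lim_{\delta\searrow0}A_k(x,t,m,\varepsilon,\delta)$ for $(x,t)\in\varepsilon\mathbb{Z}^2$ (known to exist). *)

theory Defs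
  imports "HOL-Analysis.Analysis"
begin

text \<open>Lattice points (x,t) with 2x/eps, 2t/eps, (x+t)/eps integers are encoded by
  integer indices (a,b) = (2x/eps, 2t/eps) with a+b even; so x = a*eps/2, t = b*eps/2.
  "2x/eps, 2t/eps even" means a, b even, i.e. (x,t) in eps Z^2;
  "2x/eps, 2t/eps odd" means a, b odd. A shift x +- eps/2 is a +- 1.\<close>

definition is_A ::
  "real \<Rightarrow> real \<Rightarrow> real \<Rightarrow> (int \<Rightarrow> int \<Rightarrow> complex) \<Rightarrow> (int \<Rightarrow> int \<Rightarrow> complex) \<Rightarrow> bool" where
  "is_A m eps \<delta> A1 A2 \<longleftrightarrow>
     (\<forall>a b. even a \<and> even b \<longrightarrow>
        A1 a b = (1 / sqrt (1 + m\<^sup>2 * eps\<^sup>2)) *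
                  (A1 (a + 1) (b - 1) + complex_of_real (m * eps) * A2 (a + 1) (b - 1)) \<and>
        A2 a b = (1 / sqrt (1 + m\<^sup>2 * eps\<^sup>2)) *
                  (A2 (a - 1) (b - 1) - complex_of_real (m * eps) * A1 (a - 1) (b - 1))
                 + (if a = 0 \<and> b = 0 then 2 else 0)) \<and>
     (\<forall>a b. odd a \<and> odd b \<longrightarrow>
        A1 a b = (1 / sqrt (1 - \<delta>\<^sup>2)) *
                  (A1 (a + 1) (b - 1) - \<i> * complex_of_real \<delta> * A2 (a + 1) (b - 1)) \<and>
        A2 a b = (1 / sqrt (1 - \<delta>\<^sup>2)) *
                  (A2 (a - 1) (b - 1) + \<i> * complex_of_real \<delta> * A1 (a - 1) (b - 1))) \<and>
     (\<lambda>(i::int, j::int). (cmod (A1 (2*i) (2*j)))\<^sup>2 + (cmod (A2 (2*i) (2*j)))\<^sup>2) summable_on UNIV"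

end

theory Submission
  imports Defs
begin

text \<open>Composing an even (mass) step with an odd (\<open>\<delta>\<close>) step of the recursion relates two
  consecutive layers of \<open>\<epsilon>\<int>\<^sup>2\<close>; the coefficients of the odd step, \<open>1/sqrt(1-\<delta>\<^sup>2)\<close> and
  \<open>\<plusminus>i\<delta>\<close>, tend to \<open>1\<close> and \<open>0\<close>. Hence the limits satisfy the lattice Dirac equations
  \<open>c \<tilde>A\<^sub>1(x,t) = \<tilde>A\<^sub>1(x+\<epsilon>,t-\<epsilon>) + m\<epsilon> \<tilde>A\<^sub>2(x,t-\<epsilon>)\<close> and
  \<open>c \<tilde>A\<^sub>2(x,t) = \<tilde>A\<^sub>2(x-\<epsilon>,t-\<epsilon>) - m\<epsilon> \<tilde>A\<^sub>1(x,t-\<epsilon>)\<close>, the latter away from the source at the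
  origin, where \<open>c = sqrt(1+m\<^sup>2\<epsilon>\<^sup>2)\<close>. Eliminating one component using \<open>c\<^sup>2 = 1 + (m\<epsilon>)\<^sup>2\<close>
  gives the second-order equation; the excluded points are exactly those where the
  elimination would use the second Dirac equation at the origin.\<close>

lemma lattice_klein_gordon_fst:
  fixes u v :: "int \<Rightarrow> int \<Rightarrow> 'a::field"
  assumes mass_shell: "c * c = 1 + \<mu> * \<mu>" and "c \<noteq> 0"
    and D1_up: "c * u i (j + 1) = u (i + 1) j + \<mu> * v i j"
    and D1_left: "c * u (i - 1) j = u i (j - 1) + \<mu> * v (i - 1) (j - 1)"
    and D2: "c * v i j = v (i - 1) (j - 1) - \<mu> * u i (j - 1)"
  shows "c * u i (j + 1) + c * u i (j - 1) - u (i + 1) j - u (i - 1) j = 0"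
proof -
  have "c * (c * u i (j + 1) + c * u i (j - 1) - u (i + 1) j - u (i - 1) j)
      = c * (c * u i (j + 1) - u (i + 1) j - \<mu> * v i j)
        + \<mu> * (c * v i j - v (i - 1) (j - 1) + \<mu> * u i (j - 1))
        - (c * u (i - 1) j - u i (j - 1) - \<mu> * v (i - 1) (j - 1))
        + (c * c - 1 - \<mu> * \<mu>) * u i (j - 1)"
    by (simp add: algebra_simps)
  also have "\<dots> = 0"
    using mass_shell D1_up D1_left D2 by simp
  finally show ?thesis
    using \<open>c \<noteq> 0\<close> by simp
qed

lemma lattice_klein_gordon_snd:
  fixes u v :: "int \<Rightarrow> int \<Rightarrow> 'a::field"
  assumes mass_shell: "c * c = 1 + \<mu> * \<mu>" and "c \<noteq> 0"
    and D1: "c * u i j = u (i + 1) (j - 1) + \<mu> * v i (j - 1)"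
    and D2_up: "c * v i (j + 1) = v (i - 1) j - \<mu> * u i j"
    and D2_right: "c * v (i + 1) j = v i (j - 1) - \<mu> * u (i + 1) (j - 1)"
  shows "c * v i (j + 1) + c * v i (j - 1) - v (i + 1) j - v (i - 1) j = 0"
proof -
  have "c * (c * v i (j + 1) + c * v i (j - 1) - v (i + 1) j - v (i - 1) j)
      = c * (c * v i (j + 1) - v (i - 1) j + \<mu> * u i j)
        - \<mu> * (c * u i j - u (i + 1) (j - 1) - \<mu> * v i (j - 1))
        - (c * v (i + 1) j - v i (j - 1) + \<mu> * u (i + 1) (j - 1))
        + (c * c - 1 - \<mu> * \<mu>) * v i (j - 1)"
    by (simp add: algebra_simps)
  also have "\<dots> = 0"
    using mass_shell D1 D2_up D2_right by simp
  finally show ?thesis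
    using \<open>c \<noteq> 0\<close> by simp
qed

lemma is_A_even_stepD:
  assumes "is_A m eps \<delta> A1 A2" and "even a" and "even b"
  shows "A1 a b = (1 / sqrt (1 + m\<^sup>2 * eps\<^sup>2)) *
           (A1 (a + 1) (b - 1) + complex_of_real (m * eps) * A2 (a + 1) (b - 1))"
    and "A2 a b = (1 / sqrt (1 + m\<^sup>2 * eps\<^sup>2)) *
           (A2 (a - 1) (b - 1) - complex_of_real (m * eps) * A1 (a - 1) (b - 1))
         + (if a = 0 \<and> b = 0 then 2 else 0)"
  using assms unfolding is_A_def by blast+

lemma is_A_odd_stepD:
  assumes "is_A m eps \<delta> A1 A2" and "odd a" and "odd b"
  shows "A1 a b = (1 / sqrt (1 - \<delta>\<^sup>2)) *
           (A1 (a + 1) (b - 1) - \<i> * complex_of_real \<delta> * A2 (a + 1) (b - 1))"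
    and "A2 a b = (1 / sqrt (1 - \<delta>\<^sup>2)) *
           (A2 (a - 1) (b - 1) + \<i> * complex_of_real \<delta> * A1 (a - 1) (b - 1))"
  using assms unfolding is_A_def by blast+

lemma sqrt_one_plus_square_pos: "0 < sqrt (1 + x\<^sup>2 * y\<^sup>2)"
  by (simp add: add_pos_nonneg)

lemma of_real_sqrt_one_plus_square_mult_self:
  "complex_of_real (sqrt (1 + x\<^sup>2 * y\<^sup>2)) * complex_of_real (sqrt (1 + x\<^sup>2 * y\<^sup>2))
    = 1 + complex_of_real (x * y) * complex_of_real (x * y)"
proof -
  have "sqrt (1 + x\<^sup>2 * y\<^sup>2) * sqrt (1 + x\<^sup>2 * y\<^sup>2) = 1 + (x * y) * (x * y)"
    by (simp add: real_sqrt_mult_self power2_eq_square)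
  then show ?thesis
    by (metis of_real_1 of_real_add of_real_mult)
qed

lemma is_A_two_step_fst:
  assumes "is_A m eps \<delta> A1 A2"
  shows "complex_of_real (sqrt (1 + m\<^sup>2 * eps\<^sup>2)) * A1 (2*i) (2*j)
    = complex_of_real (1 / sqrt (1 - \<delta>\<^sup>2))
        * (A1 (2*(i+1)) (2*(j-1)) - \<i> * complex_of_real \<delta> * A2 (2*(i+1)) (2*(j-1)))
      + complex_of_real (m * eps) * (complex_of_real (1 / sqrt (1 - \<delta>\<^sup>2))
        * (A2 (2*i) (2*(j-1)) + \<i> * complex_of_real \<delta> * A1 (2*i) (2*(j-1))))"
proof -
  have "A1 (2*i) (2*j) = (1 / sqrt (1 + m\<^sup>2 * eps\<^sup>2)) *
      (A1 (2*i + 1) (2*j - 1) + complex_of_real (m * eps) * A2 (2*i + 1) (2*j - 1))"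
    using is_A_even_stepD(1)[OF assms] by simp
  moreover have "2*i + 1 + 1 = 2*(i+1)" "2*j - 1 - 1 = 2*(j-1)" "2*i + 1 - 1 = 2*i"
    by simp_all
  ultimately show ?thesis
    using is_A_odd_stepD[OF assms, of "2*i + 1" "2*j - 1"] sqrt_one_plus_square_pos[of m eps]
    by (simp add: field_simps)
qed

lemma is_A_two_step_snd:
  assumes "is_A m eps \<delta> A1 A2" and "(i, j) \<noteq> (0, 0)"
  shows "complex_of_real (sqrt (1 + m\<^sup>2 * eps\<^sup>2)) * A2 (2*i) (2*j)
    = complex_of_real (1 / sqrt (1 - \<delta>\<^sup>2))
        * (A2 (2*(i-1)) (2*(j-1)) + \<i> * complex_of_real \<delta> * A1 (2*(i-1)) (2*(j-1)))
      - complex_of_real (m * eps) * (complex_of_real (1 / sqrt (1 - \<delta>\<^sup>2))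
        * (A1 (2*i) (2*(j-1)) - \<i> * complex_of_real \<delta> * A2 (2*i) (2*(j-1))))"
proof -
  have "A2 (2*i) (2*j) = (1 / sqrt (1 + m\<^sup>2 * eps\<^sup>2)) *
      (A2 (2*i - 1) (2*j - 1) - complex_of_real (m * eps) * A1 (2*i - 1) (2*j - 1))"
    using is_A_even_stepD(2)[OF assms(1)] assms(2) by simp
  moreover have "2*i - 1 - 1 = 2*(i-1)" "2*j - 1 - 1 = 2*(j-1)" "2*i - 1 + 1 = 2*i"
    by simp_all
  ultimately show ?thesis
    using is_A_odd_stepD[OF assms(1), of "2*i - 1" "2*j - 1"] sqrt_one_plus_square_pos[of m eps]
    by (simp add: field_simps)
qed

lemma odd_step_tendsto:
  assumes "(X \<longlongrightarrow> x) (at_right 0)" and "(Y \<longlongrightarrow> y) (at_right 0)"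
  shows "((\<lambda>\<delta>. complex_of_real (1 / sqrt (1 - \<delta>\<^sup>2)) * (X \<delta> + \<i> * complex_of_real \<delta> * Y \<delta>))
           \<longlongrightarrow> x) (at_right 0)"
    and "((\<lambda>\<delta>. complex_of_real (1 / sqrt (1 - \<delta>\<^sup>2)) * (X \<delta> - \<i> * complex_of_real \<delta> * Y \<delta>))
           \<longlongrightarrow> x) (at_right 0)"
  using assms by (auto intro!: tendsto_eq_intros)

lemma limit_dirac_step_fst:
  assumes sol: "eventually (\<lambda>\<delta>. is_A m eps \<delta> (A1 \<delta>) (A2 \<delta>)) (at_right 0)"
    and lim1: "\<And>i j. ((\<lambda>\<delta>. A1 \<delta> (2*i) (2*j)) \<longlongrightarrow> At1 i j) (at_right 0)"
    and lim2: "\<And>i j. ((\<lambda>\<delta>. A2 \<delta> (2*i) (2*j)) \<longlongrightarrow> At2 i j) (at_right 0)"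
  shows "complex_of_real (sqrt (1 + m\<^sup>2 * eps\<^sup>2)) * At1 i j
    = At1 (i+1) (j-1) + complex_of_real (m * eps) * At2 i (j-1)"
proof (rule tendsto_unique)
  show "((\<lambda>\<delta>. complex_of_real (sqrt (1 + m\<^sup>2 * eps\<^sup>2)) * A1 \<delta> (2*i) (2*j))
      \<longlongrightarrow> complex_of_real (sqrt (1 + m\<^sup>2 * eps\<^sup>2)) * At1 i j) (at_right 0)"
    using lim1 by (rule tendsto_mult_left)
  show "((\<lambda>\<delta>. complex_of_real (sqrt (1 + m\<^sup>2 * eps\<^sup>2)) * A1 \<delta> (2*i) (2*j))
      \<longlongrightarrow> At1 (i+1) (j-1) + complex_of_real (m * eps) * At2 i (j-1)) (at_right 0)"
    \<comment> \<open>the leftover goals are limits of the \<open>\<delta>\<close>-weighted terms, whose value is irrelevant\<close>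
    by (rule tendsto_cong[THEN iffD2], rule eventually_mono[OF sol], erule is_A_two_step_fst)
      (intro tendsto_add tendsto_mult_left odd_step_tendsto lim1 lim2; rule lim1 lim2)
qed simp

lemma limit_dirac_step_snd:
  assumes sol: "eventually (\<lambda>\<delta>. is_A m eps \<delta> (A1 \<delta>) (A2 \<delta>)) (at_right 0)"
    and lim1: "\<And>i j. ((\<lambda>\<delta>. A1 \<delta> (2*i) (2*j)) \<longlongrightarrow> At1 i j) (at_right 0)"
    and lim2: "\<And>i j. ((\<lambda>\<delta>. A2 \<delta> (2*i) (2*j)) \<longlongrightarrow> At2 i j) (at_right 0)"
    and "(i, j) \<noteq> (0, 0)"
  shows "complex_of_real (sqrt (1 + m\<^sup>2 * eps\<^sup>2)) * At2 i j
    = At2 (i-1) (j-1) - complex_of_real (m * eps) * At1 i (j-1)"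
proof (rule tendsto_unique)
  show "((\<lambda>\<delta>. complex_of_real (sqrt (1 + m\<^sup>2 * eps\<^sup>2)) * A2 \<delta> (2*i) (2*j))
      \<longlongrightarrow> complex_of_real (sqrt (1 + m\<^sup>2 * eps\<^sup>2)) * At2 i j) (at_right 0)"
    using lim2 by (rule tendsto_mult_left)
  show "((\<lambda>\<delta>. complex_of_real (sqrt (1 + m\<^sup>2 * eps\<^sup>2)) * A2 \<delta> (2*i) (2*j))
      \<longlongrightarrow> At2 (i-1) (j-1) - complex_of_real (m * eps) * At1 i (j-1)) (at_right 0)"
    by (rule tendsto_cong[THEN iffD2], rule eventually_mono[OF sol],
        erule is_A_two_step_snd[OF _ \<open>(i, j) \<noteq> (0, 0)\<close>])
      (intro tendsto_diff tendsto_mult_left odd_step_tendsto lim1 lim2; rule lim1 lim2)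
qed simp

theorem proposition5:
  fixes m eps :: real
    and A1 A2 :: "real \<Rightarrow> int \<Rightarrow> int \<Rightarrow> complex"
    and At1 At2 :: "int \<Rightarrow> int \<Rightarrow> complex"
  assumes "m > 0" and "eps > 0"
    and sol: "\<And>\<delta>. 0 < \<delta> \<Longrightarrow> \<delta> < 1 \<Longrightarrow> is_A m eps \<delta> (A1 \<delta>) (A2 \<delta>)"
    and lim1: "\<And>i j. ((\<lambda>\<delta>. A1 \<delta> (2*i) (2*j)) \<longlongrightarrow> At1 i j) (at_right 0)"
    and lim2: "\<And>i j. ((\<lambda>\<delta>. A2 \<delta> (2*i) (2*j)) \<longlongrightarrow> At2 i j) (at_right 0)"
  shows "(\<forall>i j. (i, j) \<noteq> (0, 0) \<longrightarrow>
            complex_of_real (sqrt (1 + m\<^sup>2 * eps\<^sup>2)) * At1 i (j + 1)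
          + complex_of_real (sqrt (1 + m\<^sup>2 * eps\<^sup>2)) * At1 i (j - 1)
          - At1 (i + 1) j - At1 (i - 1) j = 0)
       \<and> (\<forall>i j. (i, j) \<notin> {(-1, 0), (0, -1)} \<longrightarrow>
            complex_of_real (sqrt (1 + m\<^sup>2 * eps\<^sup>2)) * At2 i (j + 1)
          + complex_of_real (sqrt (1 + m\<^sup>2 * eps\<^sup>2)) * At2 i (j - 1)
          - At2 (i + 1) j - At2 (i - 1) j = 0)"
proof -
  define c where "c = complex_of_real (sqrt (1 + m\<^sup>2 * eps\<^sup>2))"
  define \<mu> where "\<mu> = complex_of_real (m * eps)"
  have sol_eventually: "eventually (\<lambda>\<delta>. is_A m eps \<delta> (A1 \<delta>) (A2 \<delta>)) (at_right 0)"
    unfolding eventually_at_right[OF zero_less_one] using sol by (intro exI[of _ 1]) auto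
  have D1: "c * At1 i j = At1 (i+1) (j-1) + \<mu> * At2 i (j-1)" for i j
    unfolding c_def \<mu>_def by (rule limit_dirac_step_fst[OF sol_eventually lim1 lim2])
  have D2: "c * At2 i j = At2 (i-1) (j-1) - \<mu> * At1 i (j-1)" if "(i, j) \<noteq> (0, 0)" for i j
    unfolding c_def \<mu>_def by (rule limit_dirac_step_snd[OF sol_eventually lim1 lim2 that])
  have mass_shell: "c * c = 1 + \<mu> * \<mu>"
    unfolding c_def \<mu>_def by (rule of_real_sqrt_one_plus_square_mult_self)
  have "c \<noteq> 0"
    using sqrt_one_plus_square_pos[of m eps] unfolding c_def by simp
  show ?thesis
    unfolding c_def[symmetric]
  proof (intro conjI allI impI)
    fix i j :: int
    assume off_source: "(i, j) \<noteq> (0, 0)"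
    show "c * At1 i (j + 1) + c * At1 i (j - 1) - At1 (i + 1) j - At1 (i - 1) j = 0"
      by (rule lattice_klein_gordon_fst[where v = At2, OF mass_shell \<open>c \<noteq> 0\<close>])
        (use off_source in \<open>auto simp: D1 D2\<close>)
  next
    fix i j :: int
    assume off_source: "(i, j) \<notin> {(-1, 0), (0, -1)}"
    show "c * At2 i (j + 1) + c * At2 i (j - 1) - At2 (i + 1) j - At2 (i - 1) j = 0"
      by (rule lattice_klein_gordon_snd[where u = At1, OF mass_shell \<open>c \<noteq> 0\<close>])
        (use off_source in \<open>auto simp: D1 D2\<close>)
  qed
qed

end
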